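(* Let $X$ be a path-connected topological space, $a,b\in X$ with $a\neq b$, $G$ a group, and $p$ a path from $b$ to $a$. For $z\in Z^1(X,b)$, the cohomology class in $H^1(X,\{a,b\})$ of the cocycle $\varepsilon_p(z)\bullet z$ depends only on $p$ and on the cohomology class of $z$ in $H^1(X,b)$.
   Context: Conventions: a path in $W$ is a continuous map $[0,1]\to W$; $P(W)$ is the set of paths; $p\cdot q$ is concatenation; homotopies of paths are relative to $\{0,1\}$. $G$ has unit $1$. For $Y\subset W$: a $0$-cochain of $(W,Y)$ is a map $c\colon W\to G$ with $c|_Y=1$, and these form a group $C^0(W,Y)$ under pointwise multiplication; more generally any map $c\colon W\to G$ acts on maps $u\colon P(W)\to G$ by $(c\bullet u)(p)=c(p(0))u(p)c(p(1))^{-1}$. A $1$-cochain of $(W,Y)$ is $u\colon P(W)\to G$ with $u(p)=1$ for paths with image in $Y$; a cocycle additionally satisfies $u(p)=u(q)$ for homotopic $p,q$ and $u(p\cdot q)=u(p)u(q)$ when defined; $Z^1(W,Y)$ is the set of cocycles and $H^1(W,Y)$ the set of $C^0(W,Y)$-orbits. $(W,b)$ abbreviates $(W,\{b\})$. $G_a\subset C^0(X,b)$ is the subgroup of $0$-cochains equal to $1$ on $X\setminus\{a\}$, identified with $G$ via the value at $a$. For $z\in Z^1(X,b)$, $\varepsilon_p(z)\in G_a$ is the element with value $z(p)$ at $a$. (Since $\{a,b\}$ is discrete, $\varepsilon_p(z)\bullet z\in Z^1(X,\{a,b\})$.) *)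

theory Defs
  imports "HOL-Analysis.Analysis" "HOL-Algebra.Group"
begin

definition Paths :: "'a topology \<Rightarrow> (real \<Rightarrow> 'a) set" where
  "Paths W = {p. pathin W p}"

definition path_homotopic :: "'a topology \<Rightarrow> (real \<Rightarrow> 'a) \<Rightarrow> (real \<Rightarrow> 'a) \<Rightarrow> bool" where
  "path_homotopic W p q \<longleftrightarrow>
     homotopic_with (\<lambda>r. r 0 = p 0 \<and> r 1 = p 1) (top_of_set {0..1}) W p q"

definition concat_path :: "(real \<Rightarrow> 'a) \<Rightarrow> (real \<Rightarrow> 'a) \<Rightarrow> real \<Rightarrow> 'a" where
  "concat_path p q = (\<lambda>t. if t \<le> 1/2 then p (2 * t) else q (2 * t - 1))"

definition cochain0 :: "('g, 'm) monoid_scheme \<Rightarrow> 'a topology \<Rightarrow> 'a set \<Rightarrow> ('a \<Rightarrow> 'g) \<Rightarrow> bool" where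
  "cochain0 G W Y c \<longleftrightarrow> (\<forall>x\<in>topspace W. c x \<in> carrier G) \<and> (\<forall>y\<in>Y. c y = \<one>\<^bsub>G\<^esub>)"

definition act :: "('g, 'm) monoid_scheme \<Rightarrow> ('a \<Rightarrow> 'g) \<Rightarrow> ((real \<Rightarrow> 'a) \<Rightarrow> 'g) \<Rightarrow> (real \<Rightarrow> 'a) \<Rightarrow> 'g" where
  "act G c u = (\<lambda>p. c (p 0) \<otimes>\<^bsub>G\<^esub> u p \<otimes>\<^bsub>G\<^esub> inv\<^bsub>G\<^esub> (c (p 1)))"

text \<open>1-cocycles of (W,Y) (maps on paths; only values on P(W) matter).\<close>
definition cocycle1 :: "('g, 'm) monoid_scheme \<Rightarrow> 'a topology \<Rightarrow> 'a set \<Rightarrow> ((real \<Rightarrow> 'a) \<Rightarrow> 'g) \<Rightarrow> bool" where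
  "cocycle1 G W Y u \<longleftrightarrow>
     (\<forall>p\<in>Paths W. u p \<in> carrier G) \<and>
     (\<forall>p\<in>Paths W. p ` {0..1} \<subseteq> Y \<longrightarrow> u p = \<one>\<^bsub>G\<^esub>) \<and>
     (\<forall>p\<in>Paths W. \<forall>q\<in>Paths W. path_homotopic W p q \<longrightarrow> u p = u q) \<and>
     (\<forall>p\<in>Paths W. \<forall>q\<in>Paths W. p 1 = q 0 \<longrightarrow> u (concat_path p q) = u p \<otimes>\<^bsub>G\<^esub> u q)"

definition cohomologous :: "('g, 'm) monoid_scheme \<Rightarrow> 'a topology \<Rightarrow> 'a set \<Rightarrow> ((real \<Rightarrow> 'a) \<Rightarrow> 'g) \<Rightarrow> ((real \<Rightarrow> 'a) \<Rightarrow> 'g) \<Rightarrow> bool" where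
  "cohomologous G W Y u v \<longleftrightarrow>
     (\<exists>c. cochain0 G W Y c \<and> (\<forall>p\<in>Paths W. v p = act G c u p))"

definition eps :: "('g, 'm) monoid_scheme \<Rightarrow> 'a \<Rightarrow> ((real \<Rightarrow> 'a) \<Rightarrow> 'g) \<Rightarrow> (real \<Rightarrow> 'a) \<Rightarrow> 'a \<Rightarrow> 'g" where
  "eps G a z p = (\<lambda>x. if x = a then z p else \<one>\<^bsub>G\<^esub>)"

end

theory Submission
  imports Defs
begin

text \<open>
  Let \<open>z' = c \<bullet> z\<close> with \<open>c \<in> C\<^sup>0(X,b)\<close>. Since \<open>p\<close> runs from \<open>b\<close> to \<open>a\<close> and \<open>c(b) = 1\<close>,
  we get \<open>z'(p) = z(p) c(a)\<^sup>-\<^sup>1\<close>, hence \<open>\<epsilon>\<^sub>p(z') c = c' \<epsilon>\<^sub>p(z)\<close> pointwise, where \<open>c'\<close>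
  agrees with \<open>c\<close> off \<open>a\<close> and \<open>c'(a) = 1\<close>. As \<open>\<bullet>\<close> is an action,
  \<open>\<epsilon>\<^sub>p(z') \<bullet> z' = (\<epsilon>\<^sub>p(z') c) \<bullet> z = (c' \<epsilon>\<^sub>p(z)) \<bullet> z = c' \<bullet> (\<epsilon>\<^sub>p(z) \<bullet> z)\<close>,
  and \<open>c'\<close> is a cochain of \<open>(X,{a,b})\<close>.
\<close>

lemma act_act:
  assumes "group G"
    and "c (q 0) \<in> carrier G" "c (q 1) \<in> carrier G"
    and "e (q 0) \<in> carrier G" "e (q 1) \<in> carrier G"
    and "u q \<in> carrier G"
  shows "act G c (act G e u) q = act G (\<lambda>x. c x \<otimes>\<^bsub>G\<^esub> e x) u q"
proof -
  interpret group G by fact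
  show ?thesis
    using assms(2-) by (simp add: act_def m_assoc inv_mult_group)
qed

lemma cochain0_fun_upd_one:
  assumes "monoid G" and "cochain0 G W Y c"
  shows "cochain0 G W (insert a Y) (c(a := \<one>\<^bsub>G\<^esub>))"
  using assms by (simp add: cochain0_def monoid.one_closed)

lemma eps_act_mult:
  assumes "group G" and "c b = \<one>\<^bsub>G\<^esub>" and "p 0 = b" and "p 1 = a"
    and "z p \<in> carrier G" and "c a \<in> carrier G" and "c x \<in> carrier G"
  shows "eps G a (act G c z) p x \<otimes>\<^bsub>G\<^esub> c x = (c(a := \<one>\<^bsub>G\<^esub>)) x \<otimes>\<^bsub>G\<^esub> eps G a z p x"
proof -
  interpret group G by fact
  show ?thesis
    using assms(2-) by (simp add: eps_def act_def m_assoc)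
qed

lemma act_eps_of_act:
  assumes "group G" and "c b = \<one>\<^bsub>G\<^esub>" and "p 0 = b" and "p 1 = a"
    and "c a \<in> carrier G" and "c (q 0) \<in> carrier G" and "c (q 1) \<in> carrier G"
    and "z p \<in> carrier G" and "z q \<in> carrier G"
  shows "act G (eps G a (act G c z) p) (act G c z) q =
    act G (c(a := \<one>\<^bsub>G\<^esub>)) (act G (eps G a z p) z) q"
proof -
  interpret group G by fact
  have "act G c z p \<in> carrier G"
    using assms(2-5,8) by (simp add: act_def)
  then have eps_carrier: "eps G a z p x \<in> carrier G" "eps G a (act G c z) p x \<in> carrier G" for x
    using assms(8) by (simp_all add: eps_def)
  have "act G (eps G a (act G c z) p) (act G c z) q =
      act G (\<lambda>x. eps G a (act G c z) p x \<otimes>\<^bsub>G\<^esub> c x) z q"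
    using assms(6,7,9) eps_carrier by (simp add: act_act)
  also have "\<dots> = act G (\<lambda>x. (c(a := \<one>\<^bsub>G\<^esub>)) x \<otimes>\<^bsub>G\<^esub> eps G a z p x) z q"
    using eps_act_mult[where c = c and z = z, OF assms(1-4,8,5)] assms(6,7)
    by (simp add: act_def)
  also have "\<dots> = act G (c(a := \<one>\<^bsub>G\<^esub>)) (act G (eps G a z p) z) q"
    using assms(6,7,9) eps_carrier by (simp add: act_act)
  finally show ?thesis .
qed

theorem lemma6p1:
  fixes X :: "'a topology" and G :: "('g, 'm) monoid_scheme"
    and a b :: 'a and p :: "real \<Rightarrow> 'a" and z z' :: "(real \<Rightarrow> 'a) \<Rightarrow> 'g"
  assumes "path_connected_space X"
    and "a \<in> topspace X" and "b \<in> topspace X" and "a \<noteq> b"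
    and "group G"
    and "pathin X p" and "p 0 = b" and "p 1 = a"
    and "cocycle1 G X {b} z" and "cocycle1 G X {b} z'"
    and "cohomologous G X {b} z z'"
  shows "cohomologous G X {a, b} (act G (eps G a z p) z) (act G (eps G a z' p) z')"
proof -
  obtain c where c: "cochain0 G X {b} c" and z': "\<forall>q\<in>Paths X. z' q = act G c z q"
    using assms(11) unfolding cohomologous_def by blast
  have c_carrier: "\<And>x. x \<in> topspace X \<Longrightarrow> c x \<in> carrier G" and "c b = \<one>\<^bsub>G\<^esub>"
    using c by (auto simp: cochain0_def)
  have z_carrier: "\<And>q. q \<in> Paths X \<Longrightarrow> z q \<in> carrier G"
    using assms(9) by (simp add: cocycle1_def)
  have "p \<in> Paths X"
    using assms(6) by (simp add: Paths_def)
  have "act G (eps G a z' p) z' q = act G (c(a := \<one>\<^bsub>G\<^esub>)) (act G (eps G a z p) z) q"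
    if "q \<in> Paths X" for q
  proof -
    have "act G (eps G a z' p) z' q = act G (eps G a (act G c z) p) (act G c z) q"
      using z' \<open>q \<in> Paths X\<close> \<open>p \<in> Paths X\<close> by (simp add: act_def eps_def)
    also have "\<dots> = act G (c(a := \<one>\<^bsub>G\<^esub>)) (act G (eps G a z p) z) q"
      using that \<open>p \<in> Paths X\<close> assms(2,5,7,8) \<open>c b = \<one>\<^bsub>G\<^esub>\<close> c_carrier z_carrier
      by (intro act_eps_of_act) (auto simp: Paths_def path_start_in_topspace path_finish_in_topspace)
    finally show ?thesis .
  qed
  moreover have "cochain0 G X {a, b} (c(a := \<one>\<^bsub>G\<^esub>))"
    using cochain0_fun_upd_one[OF group.is_monoid[OF assms(5)] c] by simp
  ultimately show ?thesis
    unfolding cohomologous_def by blast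
qed

end
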